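(* Suppose the $n$ units are partitioned into $L$ blocks (matched subclasses), block $l$ containing $n_{l(0)}$ control units ($A=0$) and $n_{l(1)}$ treated units ($A=1$), $n_l=n_{l(0)}+n_{l(1)}$. Let $\sigma_0^2>0$, $\sigma^2=1+\sigma_0^2$, $\rho=1/\sigma^2$, and let $\boldsymbol\Sigma$ be block diagonal (units ordered by block) with $l$-th block $\boldsymbol\Sigma_l=\sigma^2[(1-\rho)\boldsymbol I_{n_l}+\rho\boldsymbol J_{n_l}]=\boldsymbol J_{n_l}+\sigma_0^2\boldsymbol I_{n_l}$, where $\boldsymbol J_m$ is the $m\times m$ all-ones matrix. Let $(\hat\mu,\hat\tau)'=\big[X'\boldsymbol\Sigma^{-1}X\big]^{-1}X'\boldsymbol\Sigma^{-1}\boldsymbol Y_n$ with $X=(\boldsymbol 1_n,\boldsymbol A_n)$. Let $\bar Y_{l(a)}$ be the mean outcome of group $a$ in block $l$, $q_l=(1-\rho+\rho n_l)^{-1}$, and (all sums over $l=1,\dots,L$) $$C_1=\textstyle\sum q_ln_l\cdot\sum q_ln_{l(1)}n_{l(0)}(\bar Y_{l(1)}-\bar Y_{l(0)}),\quad C_2=\sum q_ln_{l(0)}\cdot\sum q_ln_{l(1)}\bar Y_{l(1)}-\sum q_ln_{l(1)}\cdot\sum q_ln_{l(0)}\bar Y_{l(0)},$$ $$D_1=\textstyle\sum q_ln_l\cdot\sum q_ln_{l(1)}n_{l(0)},\qquad D_2=\sum q_ln_{l(1)}\cdot\sum q_ln_{l(0)}.$$ Assume $D_1>0$ and $D_2>0$.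 Then $$\hat\tau=\lambda\hat\tau_1+(1-\lambda)\hat\tau_0,\qquad \hat\tau_1=\frac{C_1}{D_1},\quad \hat\tau_0=\frac{C_2}{D_2},\quad \lambda=\frac{\rho D_1}{\rho D_1+(1-\rho)D_2}.$$
   Context: This is the generalized least squares (posterior mean for fixed covariance, flat prior) estimate of the treatment effect in the nonparametric GP model $\boldsymbol Y_n\sim MVN(\mu\boldsymbol 1_n+\tau\boldsymbol A_n,\boldsymbol\Sigma)$, $\boldsymbol\Sigma=\boldsymbol K+\sigma_0^2\boldsymbol I_n$, where $\boldsymbol K=(k_{ij})$ encodes a known matching structure with $k_{ij}=1$ if units $i,j$ are in the same block (matched) and $k_{ij}=0$ otherwise. $\boldsymbol A_n=(A_1,\dots,A_n)'$ is the treatment indicator vector. *)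

theory Defs
  imports "HOL-Analysis.Analysis"
begin

text \<open>Units are indexed by a finite type 'n, blocks by a finite type 'l;
  blk i is the block of unit i.  K has k_ij = 1 iff i and j are in the same block.\<close>

definition Kmat :: "('n::finite \<Rightarrow> 'l) \<Rightarrow> real^'n^'n" where
  "Kmat blk = (\<chi> i j. if blk i = blk j then 1 else 0)"

definition SigmaMat :: "('n::finite \<Rightarrow> 'l) \<Rightarrow> real \<Rightarrow> real^'n^'n" where
  "SigmaMat blk s0sq = Kmat blk + s0sq *\<^sub>R mat 1"

definition design :: "real^'n::finite \<Rightarrow> real^2^'n" where
  "design A = (\<chi> i j. if j = 0 then 1 else A $ i)"

definition gls :: "real^'n::finite^'n \<Rightarrow> real^'n \<Rightarrow> real^'n \<Rightarrow> real^2" where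
  "gls S A Y = matrix_inv (transpose (design A) ** matrix_inv S ** design A)
               *v ((transpose (design A) ** matrix_inv S) *v Y)"

definition tau_hat :: "real^'n::finite^'n \<Rightarrow> real^'n \<Rightarrow> real^'n \<Rightarrow> real" where
  "tau_hat S A Y = gls S A Y $ 1"

definition ncount :: "('n::finite \<Rightarrow> 'l) \<Rightarrow> real^'n \<Rightarrow> 'l \<Rightarrow> real \<Rightarrow> real" where
  "ncount blk A l a = real (card {i. blk i = l \<and> A $ i = a})"

definition nblock :: "('n::finite \<Rightarrow> 'l) \<Rightarrow> 'l \<Rightarrow> real" where
  "nblock blk l = real (card {i. blk i = l})"

definition Ybar :: "('n::finite \<Rightarrow> 'l) \<Rightarrow> real^'n \<Rightarrow> real^'n \<Rightarrow> 'l \<Rightarrow> real \<Rightarrow> real" where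
  "Ybar blk A Y l a = (\<Sum>i\<in>{i. blk i = l \<and> A $ i = a}. Y $ i) / ncount blk A l a"

end

theory Submission
  imports Defs
begin

text \<open>Each diagonal block \<open>J + \<sigma>\<^sub>0\<^sup>2 I\<close> of \<open>\<Sigma>\<close> has the explicit inverse
  \<open>(I - J / (\<sigma>\<^sub>0\<^sup>2 + n\<^sub>l)) / \<sigma>\<^sub>0\<^sup>2\<close>, so every entry of \<open>X' \<Sigma>\<^sup>-\<^sup>1 X\<close> and
  \<open>X' \<Sigma>\<^sup>-\<^sup>1 Y\<close> is a sum of block totals weighted by \<open>1 / (\<sigma>\<^sub>0\<^sup>2 + n\<^sub>l) = \<rho> q\<^sub>l\<close>.
  Cramer's rule for the resulting \<open>2 \<times> 2\<close> system gives the treatment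
  coefficient \<open>(C\<^sub>1 + \<sigma>\<^sub>0\<^sup>2 C\<^sub>2) / (D\<^sub>1 + \<sigma>\<^sub>0\<^sup>2 D\<^sub>2)\<close>; since \<open>1 - \<rho> = \<sigma>\<^sub>0\<^sup>2 \<rho>\<close> this is the
  weighted mediant \<open>(\<rho> C\<^sub>1 + (1 - \<rho>) C\<^sub>2) / (\<rho> D\<^sub>1 + (1 - \<rho>) D\<^sub>2)\<close>, which is the stated
  convex combination of \<open>C\<^sub>1 / D\<^sub>1\<close> and \<open>C\<^sub>2 / D\<^sub>2\<close>.\<close>

lemma matrix_inv_eqI:
  fixes M B :: "'a::field^'n^'n"
  assumes "M ** B = mat 1"
  shows "matrix_inv M = B"
proof -
  have BM: "B ** M = mat 1"
    using assms matrix_left_right_inverse by blast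
  have "M ** matrix_inv M = mat 1"
    unfolding matrix_inv_def by (rule someI2[of _ B]) (use assms BM in auto)
  then have "matrix_inv M = (B ** M) ** matrix_inv M"
    using BM by simp
  also have "\<dots> = B"
    using \<open>M ** matrix_inv M = mat 1\<close> by (simp add: matrix_mul_assoc[symmetric])
  finally show ?thesis .
qed

lemma matrix_inv_2_mult_vec_nth_1:
  fixes M :: "'a::field^2^2" and r :: "'a^2"
  assumes det: "M$1$1 * M$2$2 - M$1$2 * M$2$1 \<noteq> 0"
  shows "(matrix_inv M *v r)$1 = (M$2$2 * r$1 - M$1$2 * r$2) / (M$1$1 * M$2$2 - M$1$2 * M$2$1)"
proof -
  define d where "d = M$1$1 * M$2$2 - M$1$2 * M$2$1"
  define B :: "'a^2^2" where
    "B = (\<chi> i j. (if i = 1 then (if j = 1 then M$2$2 else - M$1$2)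
                  else (if j = 1 then - M$2$1 else M$1$1)) / d)"
  have "d \<noteq> 0" using det by (simp add: d_def)
  then have "M ** B = mat 1"
    by (simp add: vec_eq_iff forall_2 matrix_matrix_mult_def sum_2 B_def mat_def field_simps)
       (simp add: d_def algebra_simps)
  then have "matrix_inv M = B" by (rule matrix_inv_eqI)
  then show ?thesis
    by (simp add: B_def matrix_vector_mult_def sum_2 d_def diff_divide_distrib)
qed

definition block_sum :: "('n::finite \<Rightarrow> 'l) \<Rightarrow> 'l \<Rightarrow> ('n \<Rightarrow> real) \<Rightarrow> real" where
  "block_sum blk l x = (\<Sum>i | blk i = l. x i)"

definition SigmaInv :: "('n::finite \<Rightarrow> 'l) \<Rightarrow> real \<Rightarrow> real^'n^'n" where
  "SigmaInv blk s = (\<chi> i j. ((if i = j then 1 else 0)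
      - (if blk i = blk j then 1 / (s + nblock blk (blk j)) else 0)) / s)"

lemma matrix_inv_SigmaMat:
  fixes blk :: "'n::finite \<Rightarrow> 'l"
  assumes s: "s > 0"
  shows "matrix_inv (SigmaMat blk s) = SigmaInv blk s"
proof (rule matrix_inv_eqI, unfold vec_eq_iff, intro allI)
  fix i k
  let ?b = "blk i = blk k" and ?N = "nblock blk (blk k)"
  define c where "c = 1 / (s + ?N)"
  have "s + ?N > 0" unfolding nblock_def using s by simp
  then have c: "1 - ?N * c - s * c = 0" unfolding c_def by (simp add: field_simps)
  have "(SigmaMat blk s ** SigmaInv blk s) $ i $ k
      = (\<Sum>j\<in>UNIV. ((if blk i = blk j then 1 else 0) + s * (if i = j then 1 else 0))
          * ((if j = k then 1 else 0) - (if blk j = blk k then c else 0)) / s)"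
    by (simp add: matrix_matrix_mult_def SigmaMat_def Kmat_def SigmaInv_def mat_def c_def cong: if_cong)
  also have "\<dots> = (\<Sum>j\<in>UNIV. (if j = k \<and> ?b then 1 else 0) - (if blk j = blk k \<and> ?b then c else 0)
          + (if j = i then s * (if i = k then 1 else 0) - (if ?b then s * c else 0) else 0)) / s"
    unfolding sum_divide_distrib by (intro sum.cong refl) (auto simp: algebra_simps)
  also have "\<dots> = ((if ?b then 1 - ?N * c - s * c else 0) + s * (if i = k then 1 else 0)) / s"
    by (simp add: sum.distrib sum_subtractf sum.If_cases nblock_def Int_def)
  also have "\<dots> = mat 1 $ i $ k"
    using s c by (simp add: mat_def)
  finally show "(SigmaMat blk s ** SigmaInv blk s) $ i $ k = mat 1 $ i $ k" .
qed

definition bilinear_form :: "real^'n^'n \<Rightarrow> ('n::finite \<Rightarrow> real) \<Rightarrow> ('n \<Rightarrow> real) \<Rightarrow> real" where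
  "bilinear_form S x y = (\<Sum>i\<in>UNIV. \<Sum>j\<in>UNIV. x i * S$i$j * y j)"

lemma transpose_mult_mult_nth:
  fixes D E :: "real^'m::finite^'n::finite" and S :: "real^'n^'n"
  shows "(transpose D ** S ** E)$a$b = bilinear_form S (\<lambda>i. D$i$a) (\<lambda>j. E$j$b)"
proof -
  have "(transpose D ** S ** E)$a$b = (\<Sum>k\<in>UNIV. \<Sum>i\<in>UNIV. D$i$a * S$i$k * E$k$b)"
    by (simp add: matrix_matrix_mult_def transpose_def sum_distrib_right)
  also have "\<dots> = bilinear_form S (\<lambda>i. D$i$a) (\<lambda>j. E$j$b)"
    unfolding bilinear_form_def by (rule sum.swap)
  finally show ?thesis .
qed

lemma transpose_mult_mult_vec_nth:
  fixes D :: "real^'m::finite^'n::finite" and S :: "real^'n^'n"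
  shows "((transpose D ** S) *v y)$a = bilinear_form S (\<lambda>i. D$i$a) (\<lambda>j. y$j)"
proof -
  have "((transpose D ** S) *v y)$a = (\<Sum>k\<in>UNIV. \<Sum>i\<in>UNIV. D$i$a * S$i$k * y$k)"
    by (simp add: matrix_matrix_mult_def matrix_vector_mult_def transpose_def sum_distrib_right)
  also have "\<dots> = bilinear_form S (\<lambda>i. D$i$a) (\<lambda>j. y$j)"
    unfolding bilinear_form_def by (rule sum.swap)
  finally show ?thesis .
qed

lemma sum_UNIV_blocks:
  fixes blk :: "'n::finite \<Rightarrow> 'l::finite"
  shows "(\<Sum>i\<in>UNIV. f i) = (\<Sum>l\<in>UNIV. \<Sum>i | blk i = l. f i)"
  using sum.group[of UNIV UNIV blk f] by simp

lemma bilinear_form_SigmaInv: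
  fixes blk :: "'n::finite \<Rightarrow> 'l::finite" and x y :: "'n \<Rightarrow> real"
  assumes s: "s > 0"
  defines "P \<equiv> \<lambda>l. block_sum blk l (\<lambda>i. x i * y i)"
  shows "bilinear_form (SigmaInv blk s) x y
    = (\<Sum>l\<in>UNIV. (P l + (nblock blk l * P l - block_sum blk l x * block_sum blk l y) / s)
                   / (s + nblock blk l))"
proof -
  let ?c = "\<lambda>l. 1 / (s + nblock blk l)"
  have "bilinear_form (SigmaInv blk s) x y
      = (\<Sum>i\<in>UNIV. (x i * y i - x i * ?c (blk i) * block_sum blk (blk i) y) / s)"
    unfolding bilinear_form_def
  proof (rule sum.cong[OF refl])
    fix i
    have "(\<Sum>j\<in>UNIV. x i * SigmaInv blk s $ i $ j * y j)
        = (\<Sum>j\<in>UNIV. (if j = i then x i * y i else 0)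
            - (if blk j = blk i then x i * ?c (blk i) * y j else 0)) / s"
      unfolding sum_divide_distrib
      by (intro sum.cong refl) (auto simp: SigmaInv_def algebra_simps diff_divide_distrib)
    also have "\<dots> = (x i * y i - x i * ?c (blk i) * block_sum blk (blk i) y) / s"
      by (simp add: sum_subtractf sum.If_cases block_sum_def Int_def sum_distrib_left)
    finally show "(\<Sum>j\<in>UNIV. x i * SigmaInv blk s $ i $ j * y j) = \<dots>" .
  qed
  also have "\<dots> = (\<Sum>l\<in>UNIV. (P l - ?c l * block_sum blk l x * block_sum blk l y) / s)"
    by (simp add: sum_UNIV_blocks[of _ blk] P_def block_sum_def sum_divide_distrib[symmetric]
        sum_subtractf sum_distrib_right)
  also have "\<dots> = (\<Sum>l\<in>UNIV. (P l + (nblock blk l * P l - block_sum blk l x * block_sum blk l y) / s)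
                   / (s + nblock blk l))" (is "_ = (\<Sum>l\<in>UNIV. ?r l)")
  proof (rule sum.cong[OF refl])
    fix l
    have "s + nblock blk l > 0" unfolding nblock_def using s by simp
    then show "(P l - ?c l * block_sum blk l x * block_sum blk l y) / s = ?r l"
      using s by (simp add: field_simps)
  qed
  finally show ?thesis .
qed

lemma block_sum_split_treatment:
  fixes A :: "real^'n::finite"
  assumes A01: "\<forall>i. A $ i = 0 \<or> A $ i = 1"
  shows "block_sum blk l f
    = (\<Sum>i | blk i = l \<and> A$i = 1. f i) + (\<Sum>i | blk i = l \<and> A$i = 0. f i)"
proof -
  have "{i. blk i = l} = {i. blk i = l \<and> A$i = 1} \<union> {i. blk i = l \<and> A$i = 0}"
    using A01 by auto
  then show ?thesis
    unfolding block_sum_def by (simp add: sum.union_disjoint[symmetric] disjoint_iff)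
qed

lemma ncount_mult_Ybar:
  "ncount blk A l a * Ybar blk A Y l a = (\<Sum>i | blk i = l \<and> A $ i = a. Y $ i)"
  by (cases "ncount blk A l a = 0") (auto simp: Ybar_def ncount_def intro!: sum.neutral)

lemma block_sums_binary_treatment:
  fixes blk :: "'n::finite \<Rightarrow> 'l" and A Y :: "real^'n"
  assumes A01: "\<forall>i. A $ i = 0 \<or> A $ i = 1"
  shows "nblock blk l = ncount blk A l 0 + ncount blk A l 1"
    and "block_sum blk l (\<lambda>i. 1) = nblock blk l"
    and "block_sum blk l (\<lambda>i. A$i) = ncount blk A l 1"
    and "block_sum blk l (\<lambda>i. A$i * A$i) = ncount blk A l 1"
    and "block_sum blk l (\<lambda>i. A$i * Y$i) = ncount blk A l 1 * Ybar blk A Y l 1"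
    and "block_sum blk l (\<lambda>i. Y$i)
           = ncount blk A l 1 * Ybar blk A Y l 1 + ncount blk A l 0 * Ybar blk A Y l 0"
proof -
  have on_group: "(\<Sum>i | blk i = l \<and> A$i = a. g (A$i) i) = (\<Sum>i | blk i = l \<and> A$i = a. g a i)"
    for g :: "real \<Rightarrow> 'n \<Rightarrow> real" and a
    by (rule sum.cong) auto
  note split = block_sum_split_treatment[OF A01, of blk l]
  show "block_sum blk l (\<lambda>i. 1) = nblock blk l"
    by (simp add: block_sum_def nblock_def)
  then show "nblock blk l = ncount blk A l 0 + ncount blk A l 1"
    using split[of "\<lambda>i. 1"] by (simp add: ncount_def)
  show "block_sum blk l (\<lambda>i. A$i) = ncount blk A l 1"
    using split[of "\<lambda>i. A$i"] on_group[of "\<lambda>a i. a"] by (simp add: ncount_def)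
  show "block_sum blk l (\<lambda>i. A$i * A$i) = ncount blk A l 1"
    using split[of "\<lambda>i. A$i * A$i"] on_group[of "\<lambda>a i. a * a"] by (simp add: ncount_def)
  show "block_sum blk l (\<lambda>i. A$i * Y$i) = ncount blk A l 1 * Ybar blk A Y l 1"
    using split[of "\<lambda>i. A$i * Y$i"] on_group[of "\<lambda>a i. a * Y$i"] by (simp add: ncount_mult_Ybar)
  show "block_sum blk l (\<lambda>i. Y$i)
      = ncount blk A l 1 * Ybar blk A Y l 1 + ncount blk A l 0 * Ybar blk A Y l 0"
    using split[of "\<lambda>i. Y$i"] by (simp add: ncount_mult_Ybar)
qed

lemma gls_normal_equations:
  fixes blk :: "'n::finite \<Rightarrow> 'l::finite" and A Y :: "real^'n"
  assumes A01: "\<forall>i. A $ i = 0 \<or> A $ i = 1" and s: "s > 0"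
  defines "w \<equiv> \<lambda>l. 1 / (s + nblock blk l)"
    and "n0 \<equiv> \<lambda>l. ncount blk A l 0" and "n1 \<equiv> \<lambda>l. ncount blk A l 1"
    and "Y0 \<equiv> \<lambda>l. Ybar blk A Y l 0" and "Y1 \<equiv> \<lambda>l. Ybar blk A Y l 1"
    and "M \<equiv> transpose (design A) ** matrix_inv (SigmaMat blk s) ** design A"
    and "r \<equiv> (transpose (design A) ** matrix_inv (SigmaMat blk s)) *v Y"
  shows "M$1$1 = (\<Sum>l\<in>UNIV. w l * n1 l) + (\<Sum>l\<in>UNIV. w l * n1 l * n0 l) / s"
    and "M$1$2 = (\<Sum>l\<in>UNIV. w l * n1 l)"
    and "M$2$1 = (\<Sum>l\<in>UNIV. w l * n1 l)"
    and "M$2$2 = (\<Sum>l\<in>UNIV. w l * n0 l) + (\<Sum>l\<in>UNIV. w l * n1 l)"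
    and "r$1 = (\<Sum>l\<in>UNIV. w l * n1 l * Y1 l)
             + (\<Sum>l\<in>UNIV. w l * n1 l * n0 l * (Y1 l - Y0 l)) / s"
    and "r$2 = (\<Sum>l\<in>UNIV. w l * n1 l * Y1 l) + (\<Sum>l\<in>UNIV. w l * n0 l * Y0 l)"
proof -
  note block_sums = block_sums_binary_treatment(1-4)[OF A01]
    block_sums_binary_treatment(5,6)[OF A01, where Y = Y]
  have design: "design A $ i $ 1 = A$i" "design A $ i $ 2 = 1" for i
    by (simp_all add: design_def)
  have entry: "bilinear_form (SigmaInv blk s) x y = (\<Sum>l\<in>UNIV. g l)"
    if "\<And>l. w l * (block_sum blk l (\<lambda>i. x i * y i) + (nblock blk l * block_sum blk l (\<lambda>i. x i * y i)
            - block_sum blk l x * block_sum blk l y) / s) = g l"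
    for x y g
    using that by (simp add: bilinear_form_SigmaInv[OF s] w_def)
  have SigmaInv: "matrix_inv (SigmaMat blk s) = SigmaInv blk s"
    using s by (rule matrix_inv_SigmaMat)
  show "M$1$1 = (\<Sum>l\<in>UNIV. w l * n1 l) + (\<Sum>l\<in>UNIV. w l * n1 l * n0 l) / s"
    unfolding M_def SigmaInv transpose_mult_mult_nth sum_divide_distrib sum.distrib[symmetric]
    by (rule entry) (use s in \<open>simp add: design block_sums n0_def n1_def field_simps\<close>)
  show "M$1$2 = (\<Sum>l\<in>UNIV. w l * n1 l)"
    unfolding M_def SigmaInv transpose_mult_mult_nth
    by (rule entry) (use s in \<open>simp add: design block_sums n0_def n1_def field_simps\<close>)
  show "M$2$1 = (\<Sum>l\<in>UNIV. w l * n1 l)"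
    unfolding M_def SigmaInv transpose_mult_mult_nth
    by (rule entry) (use s in \<open>simp add: design block_sums n0_def n1_def field_simps\<close>)
  show "M$2$2 = (\<Sum>l\<in>UNIV. w l * n0 l) + (\<Sum>l\<in>UNIV. w l * n1 l)"
    unfolding M_def SigmaInv transpose_mult_mult_nth sum.distrib[symmetric]
    by (rule entry) (use s in \<open>simp add: design block_sums n0_def n1_def field_simps\<close>)
  show "r$1 = (\<Sum>l\<in>UNIV. w l * n1 l * Y1 l)
             + (\<Sum>l\<in>UNIV. w l * n1 l * n0 l * (Y1 l - Y0 l)) / s"
    unfolding r_def SigmaInv transpose_mult_mult_vec_nth sum_divide_distrib sum.distrib[symmetric]
    by (rule entry) (use s in \<open>simp add: design block_sums n0_def n1_def Y0_def Y1_def field_simps\<close>)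
  show "r$2 = (\<Sum>l\<in>UNIV. w l * n1 l * Y1 l) + (\<Sum>l\<in>UNIV. w l * n0 l * Y0 l)"
    unfolding r_def SigmaInv transpose_mult_mult_vec_nth sum.distrib[symmetric]
    by (rule entry) (use s in \<open>simp add: design block_sums n0_def n1_def Y0_def Y1_def field_simps\<close>)
qed

lemma weighted_mediant:
  fixes a b C1 C2 D1 D2 :: real
  assumes "D1 \<noteq> 0" "D2 \<noteq> 0" "a * D1 + b * D2 \<noteq> 0"
  shows "(a * C1 + b * C2) / (a * D1 + b * D2)
    = a * D1 / (a * D1 + b * D2) * (C1 / D1) + (1 - a * D1 / (a * D1 + b * D2)) * (C2 / D2)"
proof -
  let ?E = "a * D1 + b * D2"
  have "1 - a * D1 / ?E = b * D2 / ?E"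
    using assms(3) by (simp add: field_simps)
  then have "a * D1 / ?E * (C1 / D1) + (1 - a * D1 / ?E) * (C2 / D2) = a * C1 / ?E + b * C2 / ?E"
    using assms(1,2) by simp
  then show ?thesis by (simp add: add_divide_distrib)
qed

lemma normal_equations_2x2_solution:
  fixes M :: "real^2^2" and r :: "real^2" and s \<rho> S0 S1 Q T U0 U1 :: real
  assumes s: "s > 0" and \<rho>: "\<rho> = 1 / (1 + s)"
    and M: "M$1$1 = \<rho> * S1 + \<rho> * Q / s" "M$1$2 = \<rho> * S1" "M$2$1 = \<rho> * S1"
      "M$2$2 = \<rho> * S0 + \<rho> * S1"
    and r: "r$1 = \<rho> * U1 + \<rho> * T / s" "r$2 = \<rho> * U1 + \<rho> * U0"
    and nondegenerate: "(S0 + S1) * Q + s * (S1 * S0) \<noteq> 0"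
  shows "(matrix_inv M *v r)$1 = (\<rho> * ((S0 + S1) * T) + (1 - \<rho>) * (S0 * U1 - S1 * U0))
                                / (\<rho> * ((S0 + S1) * Q) + (1 - \<rho>) * (S1 * S0))"
proof -
  have \<rho>_complement: "1 - \<rho> = s * \<rho>" and "\<rho> \<noteq> 0"
    using s unfolding \<rho> by (simp_all add: field_simps)
  then have scale: "\<rho> * \<rho> / s \<noteq> 0" using s by simp
  have det: "M$1$1 * M$2$2 - M$1$2 * M$2$1 = (\<rho> * \<rho> / s) * ((S0 + S1) * Q + s * (S1 * S0))"
    unfolding M using s by (simp add: field_simps)
  have "M$2$2 * r$1 - M$1$2 * r$2 = (\<rho> * \<rho> / s) * ((S0 + S1) * T + s * (S0 * U1 - S1 * U0))"
    unfolding M r using s by (simp add: field_simps)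
  moreover have "\<rho> * X + (1 - \<rho>) * Z = \<rho> * (X + s * Z)" for X Z
    unfolding \<rho>_complement by (simp add: algebra_simps)
  moreover have "M$1$1 * M$2$2 - M$1$2 * M$2$1 \<noteq> 0"
    unfolding det using scale nondegenerate by simp
  ultimately show ?thesis
    unfolding matrix_inv_2_mult_vec_nth_1[OF \<open>M$1$1 * M$2$2 - M$1$2 * M$2$1 \<noteq> 0\<close>] det
    by (simp only: mult_divide_mult_cancel_left[OF scale] mult_divide_mult_cancel_left[OF \<open>\<rho> \<noteq> 0\<close>])
qed

theorem mainTheorem3:
  fixes blk :: "'n::finite \<Rightarrow> 'l::finite"
    and A Y :: "real^'n"
    and s0sq :: real
  assumes A01: "\<forall>i. A $ i = 0 \<or> A $ i = 1"
    and s0pos: "s0sq > 0"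
  defines "\<rho> \<equiv> 1 / (1 + s0sq)"
  defines "q \<equiv> (\<lambda>l. 1 / (1 - \<rho> + \<rho> * nblock blk l))"
    and "n0 \<equiv> (\<lambda>l. ncount blk A l 0)"
    and "n1 \<equiv> (\<lambda>l. ncount blk A l 1)"
    and "Y0 \<equiv> (\<lambda>l. Ybar blk A Y l 0)"
    and "Y1 \<equiv> (\<lambda>l. Ybar blk A Y l 1)"
  defines "C1 \<equiv> (\<Sum>l\<in>UNIV. q l * nblock blk l) *
                 (\<Sum>l\<in>UNIV. q l * n1 l * n0 l * (Y1 l - Y0 l))"
  defines "C2 \<equiv> (\<Sum>l\<in>UNIV. q l * n0 l) * (\<Sum>l\<in>UNIV. q l * n1 l * Y1 l)
             - (\<Sum>l\<in>UNIV. q l * n1 l) * (\<Sum>l\<in>UNIV. q l * n0 l * Y0 l)"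
  defines "D1 \<equiv> (\<Sum>l\<in>UNIV. q l * nblock blk l) * (\<Sum>l\<in>UNIV. q l * n1 l * n0 l)"
  defines "D2 \<equiv> (\<Sum>l\<in>UNIV. q l * n1 l) * (\<Sum>l\<in>UNIV. q l * n0 l)"
  assumes D1pos: "D1 > 0" and D2pos: "D2 > 0"
  defines "lam \<equiv> \<rho> * D1 / (\<rho> * D1 + (1 - \<rho>) * D2)"
  shows "tau_hat (SigmaMat blk s0sq) A Y = lam * (C1 / D1) + (1 - lam) * (C2 / D2)"
proof -
  have \<rho>_pos: "\<rho> > 0" and \<rho>_complement: "1 - \<rho> = s0sq * \<rho>"
    unfolding \<rho>_def using s0pos by (simp_all add: field_simps)
  then have "1 / (s0sq + nblock blk l) = \<rho> * q l" for l
    unfolding q_def \<rho>_complement by (simp add: mult.commute[of s0sq] distrib_left[symmetric])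
  then have weights: "(\<Sum>l\<in>UNIV. 1 / (s0sq + nblock blk l) * f l) = \<rho> * (\<Sum>l\<in>UNIV. q l * f l)"
    for f by (simp add: sum_distrib_left mult.assoc)
  have nblock_sum: "(\<Sum>l\<in>UNIV. q l * nblock blk l) = (\<Sum>l\<in>UNIV. q l * n0 l) + (\<Sum>l\<in>UNIV. q l * n1 l)"
    unfolding n0_def n1_def block_sums_binary_treatment(1)[OF A01]
    by (simp add: distrib_left sum.distrib)
  have "D1 + s0sq * D2 > 0"
    using D1pos D2pos s0pos by (intro add_pos_pos mult_pos_pos)
  then have nondegenerate: "D1 + s0sq * D2 \<noteq> 0" by simp
  note normal_equations = gls_normal_equations(1-4)[OF A01 s0pos, where blk = blk]
    gls_normal_equations(5,6)[OF A01 s0pos, where blk = blk and Y = Y]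
  have "tau_hat (SigmaMat blk s0sq) A Y = (\<rho> * C1 + (1 - \<rho>) * C2) / (\<rho> * D1 + (1 - \<rho>) * D2)"
    unfolding C1_def C2_def D1_def D2_def nblock_sum tau_hat_def gls_def
    unfolding n0_def n1_def Y0_def Y1_def mult.assoc
    by (rule normal_equations_2x2_solution[OF s0pos \<rho>_def[THEN meta_eq_to_obj_eq]
          normal_equations[unfolded mult.assoc weights]
          nondegenerate[unfolded D1_def D2_def nblock_sum n0_def n1_def mult.assoc]])
  also have "\<dots> = lam * (C1 / D1) + (1 - lam) * (C2 / D2)"
  proof (unfold lam_def, rule weighted_mediant)
    have "\<rho> * D1 + (1 - \<rho>) * D2 = \<rho> * (D1 + s0sq * D2)"
      unfolding \<rho>_complement by (simp add: algebra_simps)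
    then show "\<rho> * D1 + (1 - \<rho>) * D2 \<noteq> 0"
      using \<rho>_pos nondegenerate by simp
  qed (use D1pos D2pos in simp_all)
  finally show ?thesis .
qed

end
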